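(* Let $(\Gamma,\tau)$ be a $z$-oriented triangulation of a connected closed $2$-dimensional surface. If $(\Gamma,\tau)$ has a face of type I, then the Markov chain $\mathcal{X}_{\tau}$ is ergodic.
   Context: A triangulation $\Gamma$ of a connected closed surface $M$ (not necessarily orientable) is a closed $2$-cell embedding of a connected finite simple graph in $M$ all of whose faces are triangles. Two edges are adjacent if distinct and in a common face; two faces are adjacent if distinct and their intersection is an edge. A zigzag is a sequence of edges $(e_i)_{i\in\mathbb{N}}$ such that for every $i$: $e_i,e_{i+1}$ are adjacent, the faces containing $e_i,e_{i+1}$ and $e_{i+1},e_{i+2}$ are adjacent, and $e_i,e_{i+2}$ are disjoint; it is a cyclic sequence, equivalently a cyclic vertex sequence $v_1,\dots,v_n$ with $e_i=v_iv_{i+1}$, traversing $e_i$ from $v_i$ to $v_{i+1}$. A $z$-orientation $\tau$ is a set of zigzags containing exactly one of $Z,Z^{-1}$ (reversed zigzag) for every zigzag $Z$. Every edge is traversed exactly twice in total by zigzags of $\tau$; it is of type I if in opposite directions, of type II if in the same direction (then regarded as directed that way). Each face has either two type I edges and one type II edge (face of type I) or three type II edges forming a directed cycle (face of type II). For $v\in V=\{v_1,\dots,v_n\}$ let $d(v)$ be the number of type I edges at $v$ plus twice the number of type II edges directed out of $v$. $\mathcal{X}_{\tau}$ is the time-homogeneous Markov chain on $V$ with $p_{ij}=1/d(v_i)$ if $v_iv_j$ is a type I edge, $p_{ij}=2/d(v_i)$ if $v_iv_j$ is a type II edge directed from $v_i$ to $v_j$, $p_{ij}=0$ otherwise. Ergodic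 means irreducible and aperiodic. *)

theory Defs
  imports Complex_Main
begin

text \<open>Every edge lies in exactly two faces, the faces around each vertex form a single
  cycle (connected vertex links), and the graph is connected.\<close>

definition link_rel :: "'a set set \<Rightarrow> 'a \<Rightarrow> ('a set \<times> 'a set) set" where
  "link_rel F v = {(f, g). f \<in> F \<and> g \<in> F \<and> f \<noteq> g \<and> v \<in> f \<inter> g \<and> card (f \<inter> g) = 2}"

definition triangulation :: "'a set \<Rightarrow> 'a set set \<Rightarrow> 'a set set \<Rightarrow> bool" where
  "triangulation V E F \<longleftrightarrow>
     finite V \<and> V \<noteq> {} \<and>
     (\<forall>e\<in>E. e \<subseteq> V \<and> card e = 2) \<and>
     (\<forall>f\<in>F. f \<subseteq> V \<and> card f = 3 \<and> (\<forall>e. e \<subseteq> f \<and> card e = 2 \<longrightarrow> e \<in> E)) \<and>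
     (\<forall>e\<in>E. card {f\<in>F. e \<subseteq> f} = 2) \<and>
     (\<forall>v\<in>V. (\<exists>f\<in>F. v \<in> f) \<and>
        (\<forall>f\<in>F. \<forall>g\<in>F. v \<in> f \<and> v \<in> g \<longrightarrow> (f, g) \<in> (link_rel F v)\<^sup>*)) \<and>
     (\<forall>u\<in>V. \<forall>v\<in>V. (u, v) \<in> {(x, y). {x, y} \<in> E}\<^sup>*)"

text \<open>A zigzag given by a cyclic vertex sequence xs = [v_1,...,v_n];
  edge e_i = v_i v_(i+1), indices modulo n.\<close>

definition zz_vert :: "'a list \<Rightarrow> nat \<Rightarrow> 'a" where
  "zz_vert xs i = xs ! (i mod length xs)"

definition zz_edge :: "'a list \<Rightarrow> nat \<Rightarrow> 'a set" where
  "zz_edge xs i = {zz_vert xs i, zz_vert xs (Suc i)}"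

definition zigzag_seq :: "'a set set \<Rightarrow> 'a set set \<Rightarrow> 'a list \<Rightarrow> bool" where
  "zigzag_seq E F xs \<longleftrightarrow> xs \<noteq> [] \<and>
     (\<forall>i. zz_edge xs i \<in> E \<and>
          zz_edge xs i \<noteq> zz_edge xs (i + 1) \<and>
          (\<exists>f\<in>F. zz_edge xs i \<subseteq> f \<and> zz_edge xs (i + 1) \<subseteq> f) \<and>
          (let f1 = zz_edge xs i \<union> zz_edge xs (i + 1);
               f2 = zz_edge xs (i + 1) \<union> zz_edge xs (i + 2)
           in f1 \<noteq> f2 \<and> f1 \<inter> f2 \<in> E) \<and>
          zz_edge xs i \<inter> zz_edge xs (i + 2) = {})"

text \<open>Cyclic sequences are taken with their minimal period (primitive lists),
  and a zigzag is the class of all rotations of such a list.\<close>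

definition primitive_list :: "'a list \<Rightarrow> bool" where
  "primitive_list xs \<longleftrightarrow> (\<forall>k. 0 < k \<and> k < length xs \<longrightarrow> rotate k xs \<noteq> xs)"

definition zigzags :: "'a set set \<Rightarrow> 'a set set \<Rightarrow> 'a list set set" where
  "zigzags E F = {range (\<lambda>k. rotate k xs) | xs. zigzag_seq E F xs \<and> primitive_list xs}"

definition zz_rev :: "'a list set \<Rightarrow> 'a list set" where
  "zz_rev Z = rev ` Z"

definition z_orientation :: "'a set set \<Rightarrow> 'a set set \<Rightarrow> 'a list set set \<Rightarrow> bool" where
  "z_orientation E F \<tau> \<longleftrightarrow> \<tau> \<subseteq> zigzags E F \<and>
     (\<forall>Z\<in>zigzags E F. card ({Z, zz_rev Z} \<inter> \<tau>) = 1)"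

definition zz_count :: "'a list set \<Rightarrow> 'a \<Rightarrow> 'a \<Rightarrow> nat" where
  "zz_count Z u v = (let xs = (SOME xs. xs \<in> Z) in
     card {i. i < length xs \<and> zz_vert xs i = u \<and> zz_vert xs (Suc i) = v})"

definition trav :: "'a list set set \<Rightarrow> 'a \<Rightarrow> 'a \<Rightarrow> nat" where
  "trav \<tau> u v = (\<Sum>Z\<in>\<tau>. zz_count Z u v)"

definition typeI_edge :: "'a set set \<Rightarrow> 'a list set set \<Rightarrow> 'a \<Rightarrow> 'a \<Rightarrow> bool" where
  "typeI_edge E \<tau> u v \<longleftrightarrow> {u, v} \<in> E \<and> trav \<tau> u v = 1 \<and> trav \<tau> v u = 1"

definition typeII_dir :: "'a set set \<Rightarrow> 'a list set set \<Rightarrow> 'a \<Rightarrow> 'a \<Rightarrow> bool" where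
  "typeII_dir E \<tau> u v \<longleftrightarrow> {u, v} \<in> E \<and> trav \<tau> u v = 2 \<and> trav \<tau> v u = 0"

definition face_typeI :: "'a set set \<Rightarrow> 'a list set set \<Rightarrow> 'a set \<Rightarrow> bool" where
  "face_typeI E \<tau> f \<longleftrightarrow>
     card {e\<in>E. e \<subseteq> f \<and> (\<exists>u v. e = {u, v} \<and> typeI_edge E \<tau> u v)} = 2 \<and>
     card {e\<in>E. e \<subseteq> f \<and> (\<exists>u v. e = {u, v} \<and> typeII_dir E \<tau> u v)} = 1"

definition mc_deg :: "'a set \<Rightarrow> 'a set set \<Rightarrow> 'a list set set \<Rightarrow> 'a \<Rightarrow> nat" where
  "mc_deg V E \<tau> v = card {u\<in>V. typeI_edge E \<tau> v u} + 2 * card {u\<in>V. typeII_dir E \<tau> v u}"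

definition mc_trans :: "'a set \<Rightarrow> 'a set set \<Rightarrow> 'a list set set \<Rightarrow> 'a \<Rightarrow> 'a \<Rightarrow> real" where
  "mc_trans V E \<tau> u v =
     (if typeI_edge E \<tau> u v then 1 / real (mc_deg V E \<tau> u)
      else if typeII_dir E \<tau> u v then 2 / real (mc_deg V E \<tau> u)
      else 0)"

fun mc_pow :: "'a set \<Rightarrow> ('a \<Rightarrow> 'a \<Rightarrow> real) \<Rightarrow> nat \<Rightarrow> 'a \<Rightarrow> 'a \<Rightarrow> real" where
  "mc_pow V P 0 u v = (if u = v then 1 else 0)"
| "mc_pow V P (Suc n) u v = (\<Sum>w\<in>V. P u w * mc_pow V P n w v)"

definition irreducible_chain :: "'a set \<Rightarrow> ('a \<Rightarrow> 'a \<Rightarrow> real) \<Rightarrow> bool" where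
  "irreducible_chain V P \<longleftrightarrow> (\<forall>u\<in>V. \<forall>v\<in>V. \<exists>n. mc_pow V P n u v > 0)"

definition aperiodic_chain :: "'a set \<Rightarrow> ('a \<Rightarrow> 'a \<Rightarrow> real) \<Rightarrow> bool" where
  "aperiodic_chain V P \<longleftrightarrow> (\<forall>v\<in>V. Gcd {n. 0 < n \<and> mc_pow V P n v v > 0} = 1)"

definition ergodic_chain :: "'a set \<Rightarrow> ('a \<Rightarrow> 'a \<Rightarrow> real) \<Rightarrow> bool" where
  "ergodic_chain V P \<longleftrightarrow> irreducible_chain V P \<and> aperiodic_chain V P"

end

theory Submission
  imports Defs
begin

text \<open>
  A flag \<open>(x, y, z)\<close> is a face with an ordering of its vertices. Since every edge lies in
  exactly two faces, the step \<open>(x, y, z) \<mapsto> (y, z, t)\<close>, where \<open>t\<close> is the vertex opposite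
  to \<open>x\<close> across the edge \<open>yz\<close>, permutes the flags, and the zigzags are exactly its orbits
  read as cyclic vertex sequences. So every flag lies on exactly one zigzag, and its reverse
  \<open>(z, y, x)\<close> on the reversed zigzag, which is a different one; a z-orientation therefore
  contains exactly one flag of each reversed pair. For a face \<open>xyz\<close>, the zigzags of \<open>\<tau>\<close>
  traverse \<open>yz\<close> from \<open>y\<close> to \<open>z\<close> once for each of the flags \<open>(y, z, x)\<close> and \<open>(x, y, z)\<close>
  they contain. Hence every edge is traversed exactly twice, and if \<open>yz\<close> is traversed twice
  from \<open>y\<close> to \<open>z\<close>, then \<open>y \<rightarrow> z \<rightarrow> x \<rightarrow> y\<close> is a cycle of positive transition probabilities.
  The chain can thus follow every edge, directly or around a face, so it is irreducible.
  In a face of type I, the type II edge yields a cycle of length 3 through the endpoints of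
  a type I edge, which carries a cycle of length 2; so the chain is aperiodic.
\<close>

section \<open>Rotations and periodic extensions of lists\<close>

lemma inj_rotate: "inj (rotate k)"
  unfolding rotate_def by (simp add: inj_rotate1)

lemma zz_vert_rotate: "xs \<noteq> [] \<Longrightarrow> zz_vert (rotate k xs) i = zz_vert xs (i + k)"
  unfolding zz_vert_def by (simp add: nth_rotate mod_add_right_eq add.commute)

lemma zz_vert_rotate_fun: "xs \<noteq> [] \<Longrightarrow> zz_vert (rotate k xs) = (\<lambda>i. zz_vert xs (i + k))"
  by (simp add: fun_eq_iff zz_vert_rotate)

lemma zz_vert_add_mult_length [simp]: "zz_vert xs (i + length xs * c) = zz_vert xs i"
  unfolding zz_vert_def by simp

lemma zz_vert_add_length [simp]: "zz_vert xs (i + length xs) = zz_vert xs i"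
  using zz_vert_add_mult_length[of xs i 1] by simp

lemma zz_vert_inject:
  assumes "length xs = length ys" "zz_vert xs = zz_vert ys"
  shows "xs = ys"
proof (rule nth_equalityI)
  fix i assume "i < length xs"
  then show "xs ! i = ys ! i" using fun_cong[OF assms(2), of i] assms(1) by (simp add: zz_vert_def)
qed (fact assms(1))

lemma zz_vert_map_upt:
  assumes "0 < n" "\<And>k. s (k + n) = s k"
  shows "zz_vert (map s [0..<n]) = s"
proof
  fix i
  have "s (k + n * c) = s k" for k c
  proof (induction c)
    case (Suc c)
    have "k + n * Suc c = (k + n * c) + n" by simp
    then show ?case using Suc assms(2) by metis
  qed simp
  from this[of "i mod n" "i div n"] assms(1) show "zz_vert (map s [0..<n]) i = s i"
    by (simp add: zz_vert_def)
qed

lemma zz_vert_rev: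
  assumes "length xs dvd i + j + 1"
  shows "zz_vert (rev xs) i = zz_vert xs j"
proof -
  let ?n = "length xs"
  have n: "0 < ?n" using assms by (cases xs) auto
  have "(i mod ?n + j mod ?n + 1) mod ?n = (i + j + 1) mod ?n"
    by (metis mod_Suc_eq mod_add_eq add.commute plus_1_eq_Suc)
  then have "?n dvd i mod ?n + j mod ?n + 1"
    using assms by (simp add: dvd_eq_mod_eq_0)
  then obtain c where c: "i mod ?n + j mod ?n + 1 = ?n * c" by (elim dvdE)
  have "i mod ?n < ?n" "j mod ?n < ?n" using n by simp_all
  with c have "?n * c < ?n * 2" by linarith
  moreover have "c \<noteq> 0" using c by (intro notI) simp
  ultimately have "c = 1" by simp
  with c have "j mod ?n = ?n - Suc (i mod ?n)" by simp
  then show ?thesis using n by (simp add: zz_vert_def rev_nth)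
qed

lemma ex_dvd_add: "0 < (n::nat) \<Longrightarrow> \<exists>j. n dvd i + j"
  by (rule exI[of _ "(n - 1) * i"]) (simp add: algebra_simps flip: mult_Suc)

lemma rotate_self_dvd_length:
  assumes "primitive_list xs" "xs \<noteq> []" "rotate m xs = xs"
  shows "length xs dvd m"
proof -
  have "rotate (m mod length xs) xs = xs" using assms(3) by (simp add: rotate_conv_mod[symmetric])
  then have "m mod length xs = 0" using assms(1,2) unfolding primitive_list_def
    by (metis length_greater_0_conv mod_less_divisor neq0_conv)
  then show ?thesis by (simp add: dvd_eq_mod_eq_0)
qed

lemma rotate_eq_rotate_primitive:
  assumes "primitive_list xs" "xs \<noteq> []" "rotate i xs = rotate j xs"
  shows "i mod length xs = j mod length xs"
proof -
  have "(rotate1 ^^ length xs) xs = xs" by (simp add: rotate_def[symmetric])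
  then have "inj_on (\<lambda>k. rotate k xs) {0..<length xs}"
    using assms(1) unfolding primitive_list_def rotate_def by (intro inj_on_funpow_least) auto
  moreover have "rotate (i mod length xs) xs = rotate (j mod length xs) xs"
    using assms(3) by (simp add: rotate_conv_mod[symmetric])
  ultimately show ?thesis using assms(2) by (auto dest: inj_onD)
qed

lemma primitive_list_rotate:
  assumes "primitive_list xs"
  shows "primitive_list (rotate k xs)"
  unfolding primitive_list_def
proof (intro allI impI)
  fix m assume m: "0 < m \<and> m < length (rotate k xs)"
  have "rotate k (rotate m xs) \<noteq> rotate k xs"
    using assms m inj_rotate[of k] unfolding primitive_list_def by (auto dest: injD)
  then show "rotate m (rotate k xs) \<noteq> rotate k xs" by (simp add: rotate_rotate add.commute)
qed

lemma primitive_list_rev: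
  assumes "primitive_list xs"
  shows "primitive_list (rev xs)"
  unfolding primitive_list_def
proof (intro allI impI notI)
  fix k assume k: "0 < k \<and> k < length (rev xs)" and "rotate k (rev xs) = rev xs"
  then have "rotate (length xs - k) xs = xs" by (simp add: rotate_rev)
  moreover have "0 < length xs - k" "length xs - k < length xs" using k by auto
  ultimately show False using assms unfolding primitive_list_def by blast
qed

lemma zz_vert_inject_primitive:
  assumes "primitive_list xs" "primitive_list ys" "xs \<noteq> []" "ys \<noteq> []" "zz_vert xs = zz_vert ys"
  shows "xs = ys"
proof -
  have "rotate (length ys) xs = xs"
    using assms(3,5) by (intro zz_vert_inject) (simp_all add: zz_vert_rotate_fun)
  moreover have "rotate (length xs) ys = ys"
    using assms(4,5) by (intro zz_vert_inject) (simp_all add: zz_vert_rotate_fun flip: assms(5))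
  ultimately have "length xs = length ys"
    using rotate_self_dvd_length assms(1-4) by (blast intro: dvd_antisym)
  then show ?thesis using assms(5) by (rule zz_vert_inject)
qed

lemma range_rotate_rotate: "range (\<lambda>k. rotate k (rotate j xs)) = range (\<lambda>k. rotate k xs)"
proof (intro equalityI subsetI)
  fix ys assume "ys \<in> range (\<lambda>k. rotate k xs)"
  then obtain k where k: "ys = rotate k xs" by blast
  have "rotate (k + (length xs - 1) * j) (rotate j xs) = rotate (k + length xs * j) xs"
    by (cases xs) (simp_all add: rotate_rotate algebra_simps)
  also have "\<dots> = ys" using k by (metis mod_mult_self2 rotate_conv_mod)
  finally show "ys \<in> range (\<lambda>k. rotate k (rotate j xs))" by (metis rangeI)
qed (auto simp: rotate_rotate)

lemma rev_rotate: "rev (rotate k xs) = rotate (length xs - k mod length xs) (rev xs)"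
proof (cases "xs = [] \<or> k mod length xs = 0")
  case True
  then show ?thesis by auto
next
  case False
  then have "0 < k mod length xs" "k mod length xs < length xs" by auto
  then show ?thesis by (simp add: rotate_rev rotate_conv_mod[of k xs])
qed

lemma rev_image_rotations: "rev ` range (\<lambda>k. rotate k xs) = range (\<lambda>k. rotate k (rev xs))"
proof
  show "rev ` range (\<lambda>k. rotate k xs) \<subseteq> range (\<lambda>k. rotate k (rev xs))"
    by (auto simp: rev_rotate)
  show "range (\<lambda>k. rotate k (rev xs)) \<subseteq> rev ` range (\<lambda>k. rotate k xs)"
    by (auto simp: rotate_rev)
qed

text \<open>
  A reflection of a cycle fixes a vertex or the midpoint of an edge, so two positions at
  distance 1 or 2 carry the same entry; the witness \<open>i\<close> below solves
  \<open>2 i + j + d + 1 \<equiv> 0 (mod length xs)\<close>.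
\<close>

lemma rev_eq_rotate_repeat:
  assumes "rev xs = rotate j xs" "xs \<noteq> []"
  obtains i d where "d = 1 \<or> d = 2" "zz_vert xs (i + d) = zz_vert xs i"
proof -
  let ?n = "length xs"
  define N where "N = j + 2 + (j + 2) mod 2"
  define i where "i = (?n - 1) * N div 2"
  define d where "d = 1 + (j + 2) mod 2"
  have "even N" unfolding N_def by presburger
  then have "2 * i = (?n - 1) * N" unfolding i_def by simp
  then have "i + (i + j + d) + 1 = ?n * N"
    using assms(2) unfolding N_def d_def by (cases ?n) (simp_all add: algebra_simps)
  then have "zz_vert (rev xs) i = zz_vert xs (i + j + d)" by (intro zz_vert_rev) simp
  moreover have "zz_vert (rev xs) i = zz_vert xs (i + j)" using assms by (simp add: zz_vert_rotate)
  ultimately have "zz_vert xs (i + j + d) = zz_vert xs (i + j)" by simp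
  moreover have "d = 1 \<or> d = 2" unfolding d_def by presburger
  ultimately show thesis using that by blast
qed

lemma funpow_return_inj_on:
  assumes "finite A" "f ` A \<subseteq> A" "inj_on f A" "x \<in> A"
  obtains n where "0 < n" "(f ^^ n) x = x"
proof -
  define p where "p y = (if y \<in> A then f y else y)" for y
  have "inj p" using assms(2,3) by (auto simp: inj_def inj_on_def p_def)
  have orbit: "(p ^^ k) x = (f ^^ k) x \<and> (f ^^ k) x \<in> A" for k
    by (induction k) (use assms(2,4) in \<open>auto simp: p_def\<close>)
  have "finite {y. \<exists>k. y = (p ^^ k) x}" using orbit by (intro finite_subset[OF _ assms(1)]) auto
  with funpow_inj_finite[OF \<open>inj p\<close>] orbit that show thesis by metis
qed

section \<open>Flags and flag walks\<close>

definition flags :: "'a set set \<Rightarrow> ('a \<times> 'a \<times> 'a) set" where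
  "flags F = {(x, y, z). x \<noteq> y \<and> y \<noteq> z \<and> x \<noteq> z \<and> {x, y, z} \<in> F}"

definition opposite :: "'a set set \<Rightarrow> 'a \<Rightarrow> 'a \<Rightarrow> 'a \<Rightarrow> 'a" where
  "opposite F x y z = (THE t. (t, y, z) \<in> flags F \<and> t \<noteq> x)"

definition flag_step :: "'a set set \<Rightarrow> 'a \<times> 'a \<times> 'a \<Rightarrow> 'a \<times> 'a \<times> 'a" where
  "flag_step F = (\<lambda>(x, y, z). (y, z, opposite F x y z))"

definition flag_rev :: "'a \<times> 'a \<times> 'a \<Rightarrow> 'a \<times> 'a \<times> 'a" where
  "flag_rev = (\<lambda>(x, y, z). (z, y, x))"

definition flag_at :: "(nat \<Rightarrow> 'a) \<Rightarrow> nat \<Rightarrow> 'a \<times> 'a \<times> 'a" where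
  "flag_at s i = (s i, s (Suc i), s (Suc (Suc i)))"

definition flag_walk :: "'a set set \<Rightarrow> (nat \<Rightarrow> 'a) \<Rightarrow> bool" where
  "flag_walk F s \<longleftrightarrow> (\<forall>i. flag_at s i \<in> flags F \<and> flag_step F (flag_at s i) = flag_at s (Suc i))"

definition zz_flags :: "'a list set \<Rightarrow> ('a \<times> 'a \<times> 'a) set" where
  "zz_flags Z = (\<Union>xs\<in>Z. range (flag_at (zz_vert xs)))"

lemma flag_rev_in_flags [simp]: "flag_rev \<phi> \<in> flags F \<longleftrightarrow> \<phi> \<in> flags F"
  by (auto simp: flag_rev_def flags_def insert_commute split: prod.splits)

lemma flags_rotate: "(x, y, z) \<in> flags F \<Longrightarrow> (y, z, x) \<in> flags F"
  by (auto simp: flags_def insert_commute)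

lemma flag_at_zz_vert_rotate:
  "xs \<noteq> [] \<Longrightarrow> flag_at (zz_vert (rotate k xs)) i = flag_at (zz_vert xs) (i + k)"
  by (simp add: flag_at_def zz_vert_rotate)

lemma flag_at_add_mult_length [simp]:
  "flag_at (zz_vert xs) (i + length xs * c) = flag_at (zz_vert xs) i"
  using zz_vert_add_mult_length[of xs "Suc i" c] zz_vert_add_mult_length[of xs "Suc (Suc i)" c]
  by (simp add: flag_at_def)

lemma flag_at_zz_vert_rev:
  "length xs dvd i + j + 3 \<Longrightarrow> flag_at (zz_vert (rev xs)) i = flag_rev (flag_at (zz_vert xs) j)"
  using zz_vert_rev[of xs i "Suc (Suc j)"] zz_vert_rev[of xs "Suc i" "Suc j"] zz_vert_rev[of xs "Suc (Suc i)" j]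
  by (simp add: flag_at_def flag_rev_def numeral_3_eq_3)

lemma range_flag_at_rev:
  assumes "xs \<noteq> []"
  shows "range (flag_at (zz_vert (rev xs))) = flag_rev ` range (flag_at (zz_vert xs))"
proof -
  have *: "\<exists>j. length xs dvd i + j + 3" for i
    using ex_dvd_add[of "length xs" "i + 3"] assms by (simp add: ac_simps)
  show ?thesis
  proof (intro equalityI subsetI)
    fix \<phi> assume "\<phi> \<in> range (flag_at (zz_vert (rev xs)))"
    then obtain i where "\<phi> = flag_at (zz_vert (rev xs)) i" by blast
    with *[of i] show "\<phi> \<in> flag_rev ` range (flag_at (zz_vert xs))"
      by (auto simp: flag_at_zz_vert_rev)
  next
    fix \<phi> assume "\<phi> \<in> flag_rev ` range (flag_at (zz_vert xs))"
    then obtain j where "\<phi> = flag_rev (flag_at (zz_vert xs) j)" by blast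
    with *[of j] show "\<phi> \<in> range (flag_at (zz_vert (rev xs)))"
      by (metis add.commute flag_at_zz_vert_rev rangeI)
  qed
qed

lemma zz_flags_rotations:
  assumes "xs \<noteq> []"
  shows "zz_flags (range (\<lambda>k. rotate k xs)) = range (flag_at (zz_vert xs))"
proof
  show "zz_flags (range (\<lambda>k. rotate k xs)) \<subseteq> range (flag_at (zz_vert xs))"
    using assms by (auto simp: zz_flags_def flag_at_zz_vert_rotate)
  show "range (flag_at (zz_vert xs)) \<subseteq> zz_flags (range (\<lambda>k. rotate k xs))"
    unfolding zz_flags_def by (intro UN_upper) (metis rangeI rotate0 id_apply)
qed

lemma flag_walk_shift: "flag_walk F s \<Longrightarrow> flag_walk F (\<lambda>i. s (i + k))"
  by (simp add: flag_walk_def flag_at_def)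

lemma flag_walk_determined:
  assumes "flag_walk F s" "flag_walk F t" "flag_at s i = flag_at t j"
  shows "s (i + k) = t (j + k)"
proof -
  have "flag_at s (i + k) = flag_at t (j + k)"
  proof (induction k)
    case (Suc k)
    then show ?case using assms(1,2) unfolding flag_walk_def by (metis add_Suc_right)
  qed (simp add: assms(3))
  then show ?thesis by (simp add: flag_at_def)
qed

lemma zigzag_seq_nonempty: "zigzag_seq E F xs \<Longrightarrow> xs \<noteq> []"
  unfolding zigzag_seq_def by (rule conjunct1)

lemma zigzag_seq_vertices:
  "zigzag_seq E F xs \<longleftrightarrow> xs \<noteq> [] \<and> (\<forall>i. let a = zz_vert xs i; b = zz_vert xs (Suc i);
      c = zz_vert xs (Suc (Suc i)); d = zz_vert xs (Suc (Suc (Suc i))) in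
      {a, b} \<in> E \<and> {a, b} \<noteq> {b, c} \<and> (\<exists>f\<in>F. {a, b, c} \<subseteq> f) \<and>
      {a, b, c} \<noteq> {b, c, d} \<and> {a, b, c} \<inter> {b, c, d} \<in> E \<and> {a, b} \<inter> {c, d} = {})"
  unfolding zigzag_seq_def zz_edge_def Let_def
  by (simp add: numeral_2_eq_2 insert_commute)

lemma zigzag_seqI:
  assumes "xs \<noteq> []"
    and "\<And>i a b c d. a = zz_vert xs i \<Longrightarrow> b = zz_vert xs (Suc i) \<Longrightarrow> c = zz_vert xs (Suc (Suc i)) \<Longrightarrow>
      d = zz_vert xs (Suc (Suc (Suc i))) \<Longrightarrow>
      {a, b} \<in> E \<and> {a, b} \<noteq> {b, c} \<and> (\<exists>f\<in>F. {a, b, c} \<subseteq> f) \<and>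
      {a, b, c} \<noteq> {b, c, d} \<and> {a, b, c} \<inter> {b, c, d} \<in> E \<and> {a, b} \<inter> {c, d} = {}"
  shows "zigzag_seq E F xs"
  using assms by (simp add: zigzag_seq_vertices Let_def)

lemma zigzag_seqD:
  assumes "zigzag_seq E F xs" "a = zz_vert xs i" "b = zz_vert xs (Suc i)" "c = zz_vert xs (Suc (Suc i))"
    "d = zz_vert xs (Suc (Suc (Suc i)))"
  shows "{a, b} \<in> E" "{a, b} \<noteq> {b, c}" "\<exists>f\<in>F. {a, b, c} \<subseteq> f"
    "{a, b, c} \<noteq> {b, c, d}" "{a, b, c} \<inter> {b, c, d} \<in> E" "{a, b} \<inter> {c, d} = {}"
  using assms by (simp_all add: zigzag_seq_vertices Let_def)

locale triangulated_surface =
  fixes V :: "'a set" and E F :: "'a set set"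
  assumes triangulation: "triangulation V E F"
begin

lemma finite_vertices: "finite V"
  using triangulation by (simp add: triangulation_def)

lemma edgeD: "e \<in> E \<Longrightarrow> e \<subseteq> V \<and> card e = 2"
  using triangulation by (simp add: triangulation_def)

lemma faceD: "f \<in> F \<Longrightarrow> f \<subseteq> V \<and> card f = 3 \<and> (\<forall>e. e \<subseteq> f \<and> card e = 2 \<longrightarrow> e \<in> E)"
  using triangulation by (simp add: triangulation_def)

lemma card_faces_at_edge: "e \<in> E \<Longrightarrow> card {f \<in> F. e \<subseteq> f} = 2"
  using triangulation by (simp add: triangulation_def)

lemma edges_connect: "u \<in> V \<Longrightarrow> v \<in> V \<Longrightarrow> (u, v) \<in> {(x, y). {x, y} \<in> E}\<^sup>*"
  using triangulation by (simp add: triangulation_def)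

lemma edge_distinct: "{x, y} \<in> E \<Longrightarrow> x \<noteq> y"
  using edgeD[of "{x, y}"] by auto

lemma flag_edges:
  assumes "(x, y, z) \<in> flags F"
  shows "{x, y} \<in> E" "{y, z} \<in> E" "{x, z} \<in> E"
  using assms faceD[of "{x, y, z}"] by (auto simp: flags_def)

lemma flag_vertices:
  assumes "(x, y, z) \<in> flags F"
  shows "x \<in> V" "y \<in> V" "z \<in> V"
  using assms faceD[of "{x, y, z}"] by (auto simp: flags_def)

lemma finite_flags: "finite (flags F)"
proof (rule finite_subset)
  show "flags F \<subseteq> V \<times> V \<times> V" using flag_vertices by auto
qed (simp add: finite_vertices)

lemma flagI:
  assumes "f \<in> F" "{x, y, z} \<subseteq> f" "x \<noteq> y" "y \<noteq> z" "x \<noteq> z"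
  shows "(x, y, z) \<in> flags F"
proof -
  have "f = {x, y, z}"
    using faceD[OF assms(1)] assms(2-5) by (intro card_subset_eq[symmetric]) (auto intro: card_ge_0_finite)
  then show ?thesis using assms by (simp add: flags_def)
qed

lemma face_flagE:
  assumes "f \<in> F" "y \<in> f" "z \<in> f" "y \<noteq> z"
  obtains x where "f = {x, y, z}" "(x, y, z) \<in> flags F"
proof -
  have "card (f - {y, z}) = 1"
    using faceD[OF assms(1)] assms(2-4) by (simp add: card_Diff_subset card_gt_0_iff)
  then obtain x where x: "f - {y, z} = {x}" by (rule card_1_singletonE)
  then have "f = {x, y, z}" using assms(2,3) by blast
  with x assms(1,4) show thesis by (intro that) (auto simp: flags_def)
qed

lemma edge_in_flag:
  assumes "{y, z} \<in> E"
  obtains x where "(x, y, z) \<in> flags F"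
proof -
  have "{f \<in> F. {y, z} \<subseteq> f} \<noteq> {}"
    using card_faces_at_edge[OF assms] by (metis card.empty zero_neq_numeral)
  then obtain f where f: "f \<in> F" "y \<in> f" "z \<in> f" by blast
  obtain x where "f = {x, y, z}" "(x, y, z) \<in> flags F"
    by (rule face_flagE[OF f edge_distinct[OF assms]])
  then show thesis using that by blast
qed

lemma flag_other_exists:
  assumes "(x, y, z) \<in> flags F"
  shows "\<exists>t. (t, y, z) \<in> flags F \<and> t \<noteq> x"
proof -
  have "card {f \<in> F. {y, z} \<subseteq> f} = 2" using card_faces_at_edge flag_edges(2)[OF assms] .
  moreover have "{x, y, z} \<in> {f \<in> F. {y, z} \<subseteq> f}" using assms by (simp add: flags_def)
  ultimately obtain g where g: "g \<in> F" "{y, z} \<subseteq> g" "g \<noteq> {x, y, z}"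
    by (smt (verit, del_insts) card_2_iff' mem_Collect_eq)
  moreover have "y \<noteq> z" using assms by (simp add: flags_def)
  ultimately obtain t where "g = {t, y, z}" "(t, y, z) \<in> flags F"
    using face_flagE[of g y z] by blast
  with g(3) show ?thesis by blast
qed

lemma flag_other_unique:
  assumes "(x, y, z) \<in> flags F" "(t, y, z) \<in> flags F" "(t', y, z) \<in> flags F" "t \<noteq> x" "t' \<noteq> x"
  shows "t = t'"
proof (rule ccontr)
  assume "t \<noteq> t'"
  with assms have "card {{x, y, z}, {t, y, z}, {t', y, z}} = 3"
    by (auto simp: flags_def doubleton_eq_iff insert_eq_iff card_insert_if)
  moreover have "{{x, y, z}, {t, y, z}, {t', y, z}} \<subseteq> {f \<in> F. {y, z} \<subseteq> f}"
    using assms(1-3) by (auto simp: flags_def)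
  then have "card {{x, y, z}, {t, y, z}, {t', y, z}} \<le> 2"
    using card_faces_at_edge[OF flag_edges(2)[OF assms(1)]]
    by (metis (no_types, lifting) card_mono card.infinite zero_neq_numeral)
  ultimately show False by simp
qed

lemma opposite:
  assumes "(x, y, z) \<in> flags F"
  shows "(opposite F x y z, y, z) \<in> flags F" "opposite F x y z \<noteq> x"
proof -
  have "\<exists>!t. (t, y, z) \<in> flags F \<and> t \<noteq> x"
    using flag_other_exists[OF assms] flag_other_unique[OF assms] by blast
  from theI'[OF this] show "(opposite F x y z, y, z) \<in> flags F" "opposite F x y z \<noteq> x"
    unfolding opposite_def by blast+
qed

lemma opposite_eq:
  assumes "(x, y, z) \<in> flags F" "(t, y, z) \<in> flags F" "t \<noteq> x"
  shows "opposite F x y z = t"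
  using flag_other_unique[OF assms(1) opposite(1)[OF assms(1)] assms(2) opposite(2)[OF assms(1)] assms(3)] .

lemma flag_step_in_flags: "\<phi> \<in> flags F \<Longrightarrow> flag_step F \<phi> \<in> flags F"
  by (auto simp: flag_step_def split: prod.splits intro: flags_rotate[OF opposite(1)])

lemma inj_on_flag_step: "inj_on (flag_step F) (flags F)"
proof (rule inj_onI, clarsimp)
  fix x y z a b c
  assume xyz: "(x, y, z) \<in> flags F" and abc: "(a, b, c) \<in> flags F"
    and "flag_step F (x, y, z) = flag_step F (a, b, c)"
  then have bc: "b = y" "c = z" and opp: "opposite F x y z = opposite F a y z"
    by (auto simp: flag_step_def)
  show "x = a \<and> y = b \<and> z = c"
  proof (rule ccontr)
    assume "\<not> ?thesis"
    with bc have "a \<noteq> x" by simp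
    then have "opposite F x y z = a" using opposite_eq xyz abc bc by simp
    then show False using opposite(2) abc bc opp by simp
  qed
qed

lemma flag_step_flag_rev:
  assumes "\<phi> \<in> flags F"
  shows "flag_step F (flag_rev (flag_step F \<phi>)) = flag_rev \<phi>"
proof -
  obtain x y z where \<phi>: "\<phi> = (x, y, z)" by (cases \<phi>)
  let ?t = "opposite F x y z"
  have "(?t, z, y) \<in> flags F" "(x, z, y) \<in> flags F"
    using assms opposite(1)[of x y z] flags_rotate flag_rev_in_flags
    unfolding \<phi> flag_rev_def by fastforce+
  then have "opposite F ?t z y = x" using opposite_eq opposite(2) assms \<phi> by metis
  then show ?thesis by (simp add: \<phi> flag_step_def flag_rev_def)
qed

lemma flag_walk_of_zigzag_seq:
  assumes "zigzag_seq E F xs"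
  shows "flag_walk F (zz_vert xs)"
  unfolding flag_walk_def
proof
  fix i
  define a b c d e where "a = zz_vert xs i" "b = zz_vert xs (Suc i)"
    "c = zz_vert xs (Suc (Suc i))" "d = zz_vert xs (Suc (Suc (Suc i)))"
    "e = zz_vert xs (Suc (Suc (Suc (Suc i))))"
  note at_i = zigzag_seqD[OF assms a_b_c_d_e_def(1-4)]
    and at_Suc_i = zigzag_seqD[OF assms a_b_c_d_e_def(2-5)]
    and at_Suc_Suc_i = zigzag_seqD[OF assms a_b_c_d_e_def(3-5) refl]
  have ne: "a \<noteq> b" "b \<noteq> c" "c \<noteq> d" "a \<noteq> c" "a \<noteq> d" "b \<noteq> d"
    using edge_distinct[OF at_i(1)] edge_distinct[OF at_Suc_i(1)] edge_distinct[OF at_Suc_Suc_i(1)]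
      at_i(6) at_Suc_i(2) by auto
  have abc: "(a, b, c) \<in> flags F" using at_i(3) ne flagI by blast
  have "(d, b, c) \<in> flags F" using at_Suc_i(3) ne flagI[of _ d b c] by (auto simp: insert_commute)
  then have "opposite F a b c = d" using opposite_eq[OF abc] ne by blast
  moreover have "flag_at (zz_vert xs) i = (a, b, c)" "flag_at (zz_vert xs) (Suc i) = (b, c, d)"
    by (simp_all add: flag_at_def a_b_c_d_e_def)
  ultimately show "flag_at (zz_vert xs) i \<in> flags F \<and>
      flag_step F (flag_at (zz_vert xs) i) = flag_at (zz_vert xs) (Suc i)"
    using abc by (simp add: flag_step_def)
qed

lemma zigzag_seq_of_flag_walk:
  assumes "xs \<noteq> []" "flag_walk F (zz_vert xs)"
  shows "zigzag_seq E F xs"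
proof (rule zigzag_seqI[OF assms(1)])
  fix i a b c d
  assume "a = zz_vert xs i" "b = zz_vert xs (Suc i)"
    "c = zz_vert xs (Suc (Suc i))" "d = zz_vert xs (Suc (Suc (Suc i)))"
  then have abc: "(a, b, c) \<in> flags F" and "flag_step F (a, b, c) = (b, c, d)"
    using assms(2) unfolding flag_walk_def flag_at_def by metis+
  then have "(d, b, c) \<in> flags F" "d \<noteq> a" using opposite[OF abc] by (simp_all add: flag_step_def)
  with abc have ne: "a \<noteq> b" "b \<noteq> c" "a \<noteq> c" "d \<noteq> b" "d \<noteq> c" "d \<noteq> a"
    and face: "{a, b, c} \<in> F"
    by (auto simp: flags_def)
  have "{a, b, c} \<inter> {b, c, d} = {b, c}" "{a, b} \<inter> {c, d} = {}" using ne by auto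
  moreover have "{a, b} \<noteq> {b, c}" using ne(3) by (metis doubleton_eq_iff)
  moreover have "{a, b, c} \<noteq> {b, c, d}" using ne(4-6) by (metis insertE insertI1 insertI2 singletonD)
  moreover have "\<exists>f\<in>F. {a, b, c} \<subseteq> f" using face by blast
  ultimately show "{a, b} \<in> E \<and> {a, b} \<noteq> {b, c} \<and> (\<exists>f\<in>F. {a, b, c} \<subseteq> f) \<and>
      {a, b, c} \<noteq> {b, c, d} \<and> {a, b, c} \<inter> {b, c, d} \<in> E \<and> {a, b} \<inter> {c, d} = {}"
    using flag_edges(1,2)[OF abc] by (simp only: simp_thms)
qed

lemma zigzag_seq_iff_flag_walk: "zigzag_seq E F xs \<longleftrightarrow> xs \<noteq> [] \<and> flag_walk F (zz_vert xs)"
  using flag_walk_of_zigzag_seq zigzag_seq_of_flag_walk zigzag_seq_nonempty by blast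

section \<open>Zigzags as orbits of flags\<close>

lemma zigzag_seq_rotate:
  assumes "zigzag_seq E F xs"
  shows "zigzag_seq E F (rotate k xs)"
proof -
  have "xs \<noteq> []" "flag_walk F (zz_vert xs)" using assms by (simp_all add: zigzag_seq_iff_flag_walk)
  then show ?thesis
    using flag_walk_shift[of F "zz_vert xs" k] by (simp add: zigzag_seq_iff_flag_walk zz_vert_rotate_fun)
qed

lemma zigzags_memD:
  assumes "Z \<in> zigzags E F" "xs \<in> Z"
  shows "zigzag_seq E F xs" "primitive_list xs" "Z = range (\<lambda>k. rotate k xs)"
proof -
  obtain ys k where ys: "zigzag_seq E F ys" "primitive_list ys" "Z = range (\<lambda>k. rotate k ys)"
    and xs: "xs = rotate k ys"
    using assms unfolding zigzags_def by blast
  show "zigzag_seq E F xs" "primitive_list xs" using ys xs zigzag_seq_rotate primitive_list_rotate by simp_all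
  show "Z = range (\<lambda>k. rotate k xs)" using ys(3) xs range_rotate_rotate by metis
qed

lemma zz_flags_zigzag:
  assumes "Z \<in> zigzags E F" "xs \<in> Z"
  shows "zz_flags Z = range (flag_at (zz_vert xs))"
  using zigzags_memD[OF assms] zz_flags_rotations zigzag_seq_nonempty by metis

lemma rotate_eq_of_flag_at_eq:
  assumes "zigzag_seq E F xs" "primitive_list xs" "zigzag_seq E F ys" "primitive_list ys"
    and "flag_at (zz_vert xs) i = flag_at (zz_vert ys) j"
  shows "rotate i xs = rotate j ys"
proof (rule zz_vert_inject_primitive)
  have "flag_walk F (zz_vert xs)" "flag_walk F (zz_vert ys)" "xs \<noteq> []" "ys \<noteq> []"
    using assms(1,3) by (simp_all add: zigzag_seq_iff_flag_walk)
  then show "zz_vert (rotate i xs) = zz_vert (rotate j ys)"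
    using flag_walk_determined[OF _ _ assms(5)] by (simp add: zz_vert_rotate_fun add.commute)
  show "rotate i xs \<noteq> []" "rotate j ys \<noteq> []" using \<open>xs \<noteq> []\<close> \<open>ys \<noteq> []\<close> by simp_all
qed (simp_all add: assms(2,4) primitive_list_rotate)

lemma zz_flags_unique:
  assumes "Z \<in> zigzags E F" "Z' \<in> zigzags E F" "\<phi> \<in> zz_flags Z" "\<phi> \<in> zz_flags Z'"
  shows "Z = Z'"
proof -
  obtain xs ys where xs: "zigzag_seq E F xs" "primitive_list xs" "Z = range (\<lambda>k. rotate k xs)"
    and ys: "zigzag_seq E F ys" "primitive_list ys" "Z' = range (\<lambda>k. rotate k ys)"
    using assms(1,2) unfolding zigzags_def by blast
  have "\<phi> \<in> range (flag_at (zz_vert xs))" "\<phi> \<in> range (flag_at (zz_vert ys))"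
    using assms(3,4) xs(3) ys(3) zz_flags_rotations[OF zigzag_seq_nonempty[OF xs(1)]]
      zz_flags_rotations[OF zigzag_seq_nonempty[OF ys(1)]] by simp_all
  then obtain i j where "flag_at (zz_vert xs) i = flag_at (zz_vert ys) j" by (metis rangeE)
  then have "rotate i xs = rotate j ys" using rotate_eq_of_flag_at_eq xs(1,2) ys(1,2) by blast
  then show ?thesis
    unfolding xs(3) ys(3) range_rotate_rotate[of i xs, symmetric] range_rotate_rotate[of j ys, symmetric]
    by (simp only:)
qed

lemma flag_at_in_zz_flags:
  assumes "Z \<in> zigzags E F" "xs \<in> Z"
  shows "\<phi> \<in> zz_flags Z \<longleftrightarrow> (\<exists>i < length xs. flag_at (zz_vert xs) i = \<phi>)"
proof -
  have "xs \<noteq> []" using zigzags_memD(1)[OF assms] zigzag_seq_nonempty by blast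
  have "flag_at (zz_vert xs) (i mod length xs) = flag_at (zz_vert xs) i" for i
    using flag_at_add_mult_length[of xs "i mod length xs" "i div length xs"] by simp
  then show ?thesis using zz_flags_zigzag[OF assms] \<open>xs \<noteq> []\<close>
    by (metis length_greater_0_conv mod_less_divisor rangeE rangeI)
qed

lemma card_flag_occurrences:
  assumes "Z \<in> zigzags E F" "xs \<in> Z"
  shows "card {i. i < length xs \<and> flag_at (zz_vert xs) i = \<phi>} = of_bool (\<phi> \<in> zz_flags Z)"
proof (cases "\<phi> \<in> zz_flags Z")
  case True
  then obtain i where i: "i < length xs" "flag_at (zz_vert xs) i = \<phi>"
    using flag_at_in_zz_flags[OF assms] by blast
  note xs = zigzags_memD(1,2)[OF assms]
  have unique: "j = i" if "j < length xs" "flag_at (zz_vert xs) j = \<phi>" for j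
  proof -
    have "rotate j xs = rotate i xs" using rotate_eq_of_flag_at_eq[OF xs xs] that(2) i(2) by simp
    then have "j mod length xs = i mod length xs"
      using rotate_eq_rotate_primitive[OF xs(2) zigzag_seq_nonempty[OF xs(1)]] by blast
    then show ?thesis using that(1) i(1) by simp
  qed
  have "{i. i < length xs \<and> flag_at (zz_vert xs) i = \<phi>} = {i}" using i unique by blast
  then show ?thesis using True by simp
next
  case False
  then have "{i. i < length xs \<and> flag_at (zz_vert xs) i = \<phi>} = {}"
    using flag_at_in_zz_flags[OF assms] by blast
  then show ?thesis using False by simp
qed

lemma flag_step_in_zz_flags_iff:
  assumes "Z \<in> zigzags E F" "\<phi> \<in> flags F"
  shows "flag_step F \<phi> \<in> zz_flags Z \<longleftrightarrow> \<phi> \<in> zz_flags Z"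
proof -
  obtain xs where "xs \<in> Z" using assms(1) unfolding zigzags_def by blast
  let ?s = "zz_vert xs" and ?n = "length xs"
  have Z: "zz_flags Z = range (flag_at ?s)" using zz_flags_zigzag[OF assms(1) \<open>xs \<in> Z\<close>] .
  have walk: "flag_walk F ?s" and "xs \<noteq> []"
    using zigzags_memD(1)[OF assms(1) \<open>xs \<in> Z\<close>] by (simp_all add: zigzag_seq_iff_flag_walk)
  show ?thesis
  proof
    assume "flag_step F \<phi> \<in> zz_flags Z"
    then obtain i where i: "flag_step F \<phi> = flag_at ?s i" using Z by blast
    define j where "j = i + (?n - 1)"
    have "Suc j = i + ?n" using \<open>xs \<noteq> []\<close> by (simp add: j_def)
    then have "flag_step F (flag_at ?s j) = flag_step F \<phi>"
      using walk i unfolding flag_walk_def by (metis flag_at_add_mult_length mult.right_neutral)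
    moreover have "flag_at ?s j \<in> flags F" using walk unfolding flag_walk_def by blast
    ultimately have "flag_at ?s j = \<phi>" using inj_on_flag_step assms(2) by (blast dest: inj_onD)
    then show "\<phi> \<in> zz_flags Z" using Z by blast
  next
    assume "\<phi> \<in> zz_flags Z"
    then obtain i where "\<phi> = flag_at ?s i" using Z by blast
    then have "flag_step F \<phi> = flag_at ?s (Suc i)" using walk unfolding flag_walk_def by blast
    then show "flag_step F \<phi> \<in> zz_flags Z" using Z by blast
  qed
qed

lemma flag_orbit_walk:
  assumes "\<phi> \<in> flags F"
  shows "flag_at (\<lambda>k. fst ((flag_step F ^^ k) \<phi>)) k = (flag_step F ^^ k) \<phi>"
    and "flag_walk F (\<lambda>k. fst ((flag_step F ^^ k) \<phi>))"
proof -
  have components: "(fst \<psi>, fst (flag_step F \<psi>), fst (flag_step F (flag_step F \<psi>))) = \<psi>" for \<psi>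
    by (cases \<psi>) (simp add: flag_step_def)
  show orbit: "flag_at (\<lambda>k. fst ((flag_step F ^^ k) \<phi>)) k = (flag_step F ^^ k) \<phi>" for k
    using components[of "(flag_step F ^^ k) \<phi>"] by (simp add: flag_at_def)
  have "(flag_step F ^^ k) \<phi> \<in> flags F" for k
    by (induction k) (simp_all add: assms flag_step_in_flags)
  then show "flag_walk F (\<lambda>k. fst ((flag_step F ^^ k) \<phi>))"
    by (simp add: flag_walk_def orbit)
qed

lemma ex_zigzag_through_flag:
  assumes "\<phi> \<in> flags F"
  obtains Z where "Z \<in> zigzags E F" "\<phi> \<in> zz_flags Z"
proof -
  define g where "g k = (flag_step F ^^ k) \<phi>" for k
  define s where "s k = fst (g k)" for k
  have gs: "flag_at s k = g k" for k
    using flag_orbit_walk(1)[OF assms] unfolding s_def g_def .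
  have walk: "flag_walk F s"
    using flag_orbit_walk(2)[OF assms] unfolding s_def g_def .
  have "\<exists>m. 0 < m \<and> g m = \<phi>"
    using funpow_return_inj_on[OF finite_flags _ inj_on_flag_step assms] flag_step_in_flags
    unfolding g_def by blast
  define n where "n = (LEAST n. 0 < n \<and> g n = \<phi>)"
  have n: "0 < n" "g n = \<phi>" using LeastI_ex[OF \<open>\<exists>m. 0 < m \<and> g m = \<phi>\<close>] by (simp_all add: n_def)
  have minimal: "g p \<noteq> \<phi>" if "0 < p" "p < n" for p
    using not_less_Least[of p "\<lambda>n. 0 < n \<and> g n = \<phi>"] that by (simp add: n_def)
  have "s (k + n) = s k" for k using n(2) by (simp add: s_def g_def funpow_add)
  define xs where "xs = map s [0..<n]"
  have zz: "zz_vert xs = s" unfolding xs_def by (intro zz_vert_map_upt n(1)) fact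
  have "xs \<noteq> []" using n(1) by (simp add: xs_def)
  then have "zigzag_seq E F xs" using walk zz by (simp add: zigzag_seq_iff_flag_walk)
  moreover have "primitive_list xs"
    unfolding primitive_list_def
  proof (intro allI impI notI)
    fix p assume p: "0 < p \<and> p < length (xs)" and "rotate p xs = xs"
    then have "s (i + p) = s i" for i using zz zz_vert_rotate[OF \<open>xs \<noteq> []\<close>, of p i] by simp
    then have "flag_at s p = flag_at s 0" unfolding flag_at_def by (metis add_0 add_Suc)
    then have "g p = \<phi>" by (simp add: gs g_def)
    then show False using minimal p by (simp add: xs_def)
  qed
  moreover have "\<phi> \<in> zz_flags (range (\<lambda>k. rotate k xs))"
    using gs[of 0] zz zz_flags_rotations[OF \<open>xs \<noteq> []\<close>] by (simp add: g_def) (metis rangeI)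
  ultimately show thesis using that unfolding zigzags_def by blast
qed

lemma zigzag_seq_rev:
  assumes "zigzag_seq E F xs"
  shows "zigzag_seq E F (rev xs)"
proof -
  have "xs \<noteq> []" and walk: "flag_walk F (zz_vert xs)"
    using assms by (simp_all add: zigzag_seq_iff_flag_walk)
  have "flag_walk F (zz_vert (rev xs))"
    unfolding flag_walk_def
  proof
    fix i
    obtain j where j: "length xs dvd i + 4 + j" using ex_dvd_add[of "length xs" "i + 4"] \<open>xs \<noteq> []\<close> by auto
    have rev_i: "flag_at (zz_vert (rev xs)) i = flag_rev (flag_at (zz_vert xs) (Suc j))"
      using j by (intro flag_at_zz_vert_rev) (simp add: ac_simps)
    have rev_Suc_i: "flag_at (zz_vert (rev xs)) (Suc i) = flag_rev (flag_at (zz_vert xs) j)"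
      using j by (intro flag_at_zz_vert_rev) (simp add: ac_simps)
    have flag: "flag_at (zz_vert xs) j \<in> flags F"
      and step: "flag_step F (flag_at (zz_vert xs) j) = flag_at (zz_vert xs) (Suc j)"
      using walk by (simp_all add: flag_walk_def)
    show "flag_at (zz_vert (rev xs)) i \<in> flags F \<and>
        flag_step F (flag_at (zz_vert (rev xs)) i) = flag_at (zz_vert (rev xs)) (Suc i)"
      unfolding rev_i rev_Suc_i step[symmetric]
      using flag_step_flag_rev[OF flag] flag_step_in_flags[OF flag] by simp
  qed
  then show ?thesis using \<open>xs \<noteq> []\<close> by (simp add: zigzag_seq_iff_flag_walk)
qed

lemma zz_rev_zigzag:
  assumes "Z \<in> zigzags E F"
  shows "zz_rev Z \<in> zigzags E F" "zz_flags (zz_rev Z) = flag_rev ` zz_flags Z"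
proof -
  obtain xs where xs: "zigzag_seq E F xs" "primitive_list xs" "Z = range (\<lambda>k. rotate k xs)"
    using assms unfolding zigzags_def by blast
  have rev: "zz_rev Z = range (\<lambda>k. rotate k (rev xs))"
    by (simp add: zz_rev_def xs(3) rev_image_rotations)
  show "zz_rev Z \<in> zigzags E F"
    unfolding rev zigzags_def using zigzag_seq_rev[OF xs(1)] primitive_list_rev[OF xs(2)] by blast
  have "xs \<noteq> []" using xs(1) by (rule zigzag_seq_nonempty)
  then show "zz_flags (zz_rev Z) = flag_rev ` zz_flags Z"
    unfolding rev by (simp add: xs(3) zz_flags_rotations range_flag_at_rev)
qed

lemma zz_rev_neq:
  assumes "Z \<in> zigzags E F"
  shows "zz_rev Z \<noteq> Z"
proof
  assume self_rev: "zz_rev Z = Z"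
  obtain xs where xs: "zigzag_seq E F xs" "Z = range (\<lambda>k. rotate k xs)"
    using assms unfolding zigzags_def by blast
  have "xs \<in> Z" using xs(2) by (metis rangeI rotate0 id_apply)
  then have "rev xs \<in> Z" using self_rev unfolding zz_rev_def by blast
  then obtain j where "rev xs = rotate j xs" using xs(2) by blast
  then obtain i d where d: "d = 1 \<or> d = 2" and repeat: "zz_vert xs (i + d) = zz_vert xs i"
    using rev_eq_rotate_repeat zigzag_seq_nonempty[OF xs(1)] by blast
  have "flag_at (zz_vert xs) i \<in> flags F"
    using xs(1) by (simp add: zigzag_seq_iff_flag_walk flag_walk_def)
  then have "zz_vert xs (i + 1) \<noteq> zz_vert xs i" "zz_vert xs (i + 2) \<noteq> zz_vert xs i"
    by (auto simp: flag_at_def flags_def numeral_2_eq_2)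
  with d repeat show False by blast
qed

lemma finite_zigzags: "finite (zigzags E F)"
proof (rule inj_on_finite)
  show "inj_on zz_flags (zigzags E F)"
  proof (rule inj_onI)
    fix Z Z' assume Z: "Z \<in> zigzags E F" "Z' \<in> zigzags E F" "zz_flags Z = zz_flags Z'"
    obtain xs where "xs \<in> Z" using Z(1) unfolding zigzags_def by blast
    then have "flag_at (zz_vert xs) 0 \<in> zz_flags Z" by (auto simp: zz_flags_def)
    then show "Z = Z'" using zz_flags_unique Z by metis
  qed
  show "zz_flags ` zigzags E F \<subseteq> Pow (flags F)"
    using zigzags_memD(1) by (fastforce simp: zz_flags_def zigzag_seq_iff_flag_walk flag_walk_def)
qed (simp add: finite_flags)

text \<open>
  An occurrence of \<open>y, z\<close> on the zigzag continues with \<open>x\<close> or with the opposite vertex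
  \<open>t\<close>; the occurrences continuing with \<open>t\<close> are those of the flag
  \<open>(y, z, t) = flag_step F (x, y, z)\<close>, which lies on the zigzag iff \<open>(x, y, z)\<close> does.
\<close>

lemma zz_count_flag:
  assumes "Z \<in> zigzags E F" "(x, y, z) \<in> flags F"
  shows "zz_count Z y z = of_bool ((y, z, x) \<in> zz_flags Z) + of_bool ((x, y, z) \<in> zz_flags Z)"
proof -
  define xs where "xs = (SOME xs. xs \<in> Z)"
  have "\<exists>xs. xs \<in> Z" using assms(1) unfolding zigzags_def by blast
  then have "xs \<in> Z" unfolding xs_def by (rule someI_ex)
  let ?s = "zz_vert xs"
  let ?occ = "\<lambda>\<psi>. {i. i < length xs \<and> flag_at ?s i = \<psi>}"
  have "flag_at ?s i \<in> flags F" for i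
    using zigzags_memD(1)[OF assms(1) \<open>xs \<in> Z\<close>] by (simp add: zigzag_seq_iff_flag_walk flag_walk_def)
  then have "?s (Suc (Suc i)) = x \<or> ?s (Suc (Suc i)) = opposite F x y z"
    if "?s i = y" "?s (Suc i) = z" for i
    using that opposite_eq[OF assms(2)] flags_rotate by (metis flag_at_def)
  then have "{i. i < length xs \<and> ?s i = y \<and> ?s (Suc i) = z} = ?occ (y, z, x) \<union> ?occ (y, z, opposite F x y z)"
    by (auto simp: flag_at_def)
  moreover have "?occ (y, z, x) \<inter> ?occ (y, z, opposite F x y z) = {}"
    using opposite(2)[OF assms(2)] by auto
  ultimately have "zz_count Z y z = card (?occ (y, z, x)) + card (?occ (flag_step F (x, y, z)))"
    unfolding zz_count_def xs_def[symmetric] Let_def by (simp add: card_Un_disjoint flag_step_def)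
  then show ?thesis
    using card_flag_occurrences[OF assms(1) \<open>xs \<in> Z\<close>] flag_step_in_zz_flags_iff[OF assms] by simp
qed

end

section \<open>Irreducibility and aperiodicity of finite chains\<close>

lemma mc_pow_nonneg:
  assumes "\<And>a b. 0 \<le> P a b"
  shows "0 \<le> mc_pow V P n u v"
  by (induction n arbitrary: u) (auto intro!: sum_nonneg mult_nonneg_nonneg assms)

lemma mc_pow_Suc_pos:
  assumes "finite V" "\<And>a b. 0 \<le> P a b" "w \<in> V" "0 < P u w" "0 < mc_pow V P n w v"
  shows "0 < mc_pow V P (Suc n) u v"
proof -
  have "0 < P u w * mc_pow V P n w v" using assms(4,5) by simp
  also have "\<dots> \<le> (\<Sum>a\<in>V. P u a * mc_pow V P n a v)"
    by (rule member_le_sum) (use assms in \<open>auto intro: mult_nonneg_nonneg mc_pow_nonneg\<close>)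
  finally show ?thesis by simp
qed

lemma mc_pow_add_pos:
  assumes "finite V" "\<And>a b. 0 \<le> P a b" "0 < mc_pow V P m u w" "0 < mc_pow V P n w v"
  shows "0 < mc_pow V P (m + n) u v"
  using assms(3)
proof (induction m arbitrary: u)
  case 0
  then have "u = w" by (simp split: if_splits)
  then show ?case using assms(4) by simp
next
  case (Suc m)
  have "\<exists>a\<in>V. 0 < P u a * mc_pow V P m a w"
  proof (rule ccontr)
    assume "\<not> ?thesis"
    then have "(\<Sum>a\<in>V. P u a * mc_pow V P m a w) \<le> 0" by (intro sum_nonpos) (simp add: not_less)
    then show False using Suc.prems by simp
  qed
  then obtain a where a: "a \<in> V" "0 < P u a * mc_pow V P m a w" by blast
  moreover have "0 \<le> P u a" "0 \<le> mc_pow V P m a w" using assms(2) mc_pow_nonneg[of P] by blast+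
  ultimately have "0 < P u a" "0 < mc_pow V P m a w" by (simp_all add: zero_less_mult_iff)
  then show ?case using a(1) Suc.IH mc_pow_Suc_pos[of V P, OF assms(1,2)] by simp
qed

lemma irreducible_chainI:
  assumes "finite V" "\<And>a b. 0 \<le> P a b"
    and "\<And>u v. u \<in> V \<Longrightarrow> v \<in> V \<Longrightarrow> (u, v) \<in> R\<^sup>*"
    and "\<And>y z. (y, z) \<in> R \<Longrightarrow> \<exists>n. 0 < mc_pow V P n y z"
  shows "irreducible_chain V P"
  unfolding irreducible_chain_def
proof (intro ballI)
  fix u v assume "u \<in> V" "v \<in> V"
  from assms(3)[OF this] show "\<exists>n. 0 < mc_pow V P n u v"
  proof (induction rule: rtrancl_induct)
    case base
    have "0 < mc_pow V P 0 u u" by simp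
    then show ?case by blast
  next
    case (step y z)
    obtain m k where "0 < mc_pow V P m u y" "0 < mc_pow V P k y z"
      using step.IH assms(4)[OF step.hyps(2)] by blast
    then show ?case using mc_pow_add_pos[of V P, OF assms(1,2)] by blast
  qed
qed

lemma aperiodic_chainI:
  assumes "finite V" "\<And>a b. 0 \<le> P a b" "irreducible_chain V P" "v \<in> V"
    and "0 < n" "0 < mc_pow V P n v v" "0 < mc_pow V P (Suc n) v v"
  shows "aperiodic_chain V P"
  unfolding aperiodic_chain_def
proof
  fix x assume "x \<in> V"
  then obtain a b where a: "0 < mc_pow V P a x v" and b: "0 < mc_pow V P b v x"
    using assms(3,4) unfolding irreducible_chain_def by blast
  let ?returns = "{m. 0 < m \<and> 0 < mc_pow V P m x x}"
  have "0 < mc_pow V P (a + m + b) x x" if "0 < mc_pow V P m v v" for m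
    using mc_pow_add_pos[of V P, OF assms(1,2) mc_pow_add_pos[of V P, OF assms(1,2) a that] b] .
  from this[OF assms(6)] this[OF assms(7)]
  have "a + n + b \<in> ?returns" "Suc (a + n + b) \<in> ?returns" using assms(5) by simp_all
  then have "Gcd ?returns dvd Suc (a + n + b) - (a + n + b)"
    by (intro dvd_diff_nat) (simp_all add: Gcd_dvd)
  then show "Gcd ?returns = 1" by simp
qed

section \<open>The chain of a z-oriented triangulation\<close>

lemma mc_trans_pos:
  assumes "finite V" "z \<in> V" "typeI_edge E \<tau> y z \<or> typeII_dir E \<tau> y z"
  shows "0 < mc_trans V E \<tau> y z"
proof -
  have "z \<in> {u \<in> V. typeI_edge E \<tau> y u} \<or> z \<in> {u \<in> V. typeII_dir E \<tau> y u}" using assms(2,3) by simp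
  then have "0 < mc_deg V E \<tau> y" using assms(1) unfolding mc_deg_def by (auto simp: card_gt_0_iff)
  then show ?thesis using assms(3) by (auto simp: mc_trans_def)
qed

lemma face_typeI_edges:
  assumes "face_typeI E \<tau> f"
  obtains p q u v where "{p, q} \<subseteq> f" "typeI_edge E \<tau> p q" "{u, v} \<subseteq> f" "typeII_dir E \<tau> u v"
proof -
  have "card {e \<in> E. e \<subseteq> f \<and> (\<exists>p q. e = {p, q} \<and> typeI_edge E \<tau> p q)} = 2"
    and "card {e \<in> E. e \<subseteq> f \<and> (\<exists>u v. e = {u, v} \<and> typeII_dir E \<tau> u v)} = 1"
    using assms unfolding face_typeI_def by simp_all
  then have "{e \<in> E. e \<subseteq> f \<and> (\<exists>p q. e = {p, q} \<and> typeI_edge E \<tau> p q)} \<noteq> {}"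
    and "{e \<in> E. e \<subseteq> f \<and> (\<exists>u v. e = {u, v} \<and> typeII_dir E \<tau> u v)} \<noteq> {}"
    by (auto simp del: Collect_empty_eq)
  then obtain p q u v where "{p, q} \<subseteq> f" "typeI_edge E \<tau> p q" "{u, v} \<subseteq> f" "typeII_dir E \<tau> u v"
    by blast
  then show thesis by (rule that)
qed

locale z_oriented_surface = triangulated_surface +
  fixes \<tau> :: "'a list set set"
  assumes z_orientation: "z_orientation E F \<tau>"
begin

abbreviation P :: "'a \<Rightarrow> 'a \<Rightarrow> real" where
  "P \<equiv> mc_trans V E \<tau>"

abbreviation orientation_flags :: "('a \<times> 'a \<times> 'a) set" where
  "orientation_flags \<equiv> \<Union>Z\<in>\<tau>. zz_flags Z"

lemma orientation_zigzags: "\<tau> \<subseteq> zigzags E F"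
  using z_orientation by (simp add: z_orientation_def)

lemma finite_orientation: "finite \<tau>"
  using finite_subset[OF orientation_zigzags finite_zigzags] .

lemma sum_of_bool_zz_flags:
  "(\<Sum>Z\<in>\<tau>. of_bool (\<phi> \<in> zz_flags Z)) = (of_bool (\<phi> \<in> orientation_flags) :: nat)"
proof (cases "\<phi> \<in> orientation_flags")
  case True
  then obtain Z0 where Z0: "Z0 \<in> \<tau>" "\<phi> \<in> zz_flags Z0" by blast
  then have "\<tau> \<inter> {Z. \<phi> \<in> zz_flags Z} = {Z0}"
    using zz_flags_unique orientation_zigzags by blast
  then show ?thesis using True finite_orientation by simp
next
  case False
  then have "\<tau> \<inter> {Z. \<phi> \<in> zz_flags Z} = {}" by blast
  then show ?thesis using False finite_orientation by simp
qed

lemma trav_flag: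
  assumes "(x, y, z) \<in> flags F"
  shows "trav \<tau> y z = of_bool ((y, z, x) \<in> orientation_flags) + of_bool ((x, y, z) \<in> orientation_flags)"
proof -
  have "trav \<tau> y z = (\<Sum>Z\<in>\<tau>. of_bool ((y, z, x) \<in> zz_flags Z) + of_bool ((x, y, z) \<in> zz_flags Z))"
    unfolding trav_def using zz_count_flag[OF _ assms] orientation_zigzags by (intro sum.cong) auto
  then show ?thesis by (simp only: sum.distrib sum_of_bool_zz_flags)
qed

lemma flag_rev_in_orientation_flags:
  assumes "\<phi> \<in> flags F"
  shows "flag_rev \<phi> \<in> orientation_flags \<longleftrightarrow> \<phi> \<notin> orientation_flags"
proof -
  obtain Z where Z: "Z \<in> zigzags E F" "\<phi> \<in> zz_flags Z" using ex_zigzag_through_flag[OF assms] .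
  have rev: "zz_rev Z \<in> zigzags E F" "flag_rev \<phi> \<in> zz_flags (zz_rev Z)"
    using zz_rev_zigzag[OF Z(1)] Z(2) by simp_all
  have "\<phi> \<in> orientation_flags \<longleftrightarrow> Z \<in> \<tau>"
    using Z zz_flags_unique orientation_zigzags by blast
  moreover have "flag_rev \<phi> \<in> orientation_flags \<longleftrightarrow> zz_rev Z \<in> \<tau>"
    using rev zz_flags_unique orientation_zigzags by blast
  moreover have "card ({Z, zz_rev Z} \<inter> \<tau>) = 1"
    using z_orientation Z(1) by (simp add: z_orientation_def)
  then have "zz_rev Z \<in> \<tau> \<longleftrightarrow> Z \<notin> \<tau>"
    using zz_rev_neq[OF Z(1)] by (cases "Z \<in> \<tau>"; cases "zz_rev Z \<in> \<tau>") auto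
  ultimately show ?thesis by blast
qed

lemma trav_add_trav_rev:
  assumes "(x, y, z) \<in> flags F"
  shows "trav \<tau> y z + trav \<tau> z y = 2"
proof -
  have "(x, z, y) \<in> flags F" "(y, z, x) \<in> flags F"
    using assms flags_rotate flag_rev_in_flags unfolding flag_rev_def by fastforce+
  then show ?thesis
    using trav_flag assms flag_rev_in_orientation_flags[OF assms] flag_rev_in_orientation_flags[of "(y, z, x)"]
    by (simp add: flag_rev_def)
qed


lemma P_nonneg: "0 \<le> P a b"
  by (simp add: mc_trans_def)

lemma P_step_pos: "0 < P u w \<Longrightarrow> w \<in> V \<Longrightarrow> 0 < mc_pow V P n w v \<Longrightarrow> 0 < mc_pow V P (Suc n) u v"
  using mc_pow_Suc_pos[of V P, OF finite_vertices P_nonneg] .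

lemma two_steps_pos:
  assumes "0 < P a b" "0 < P b c" "b \<in> V" "c \<in> V"
  shows "0 < mc_pow V P (Suc (Suc 0)) a c"
proof -
  have "0 < mc_pow V P 0 c c" by simp
  then have "0 < mc_pow V P (Suc 0) b c" by (rule P_step_pos[OF assms(2,4)])
  then show ?thesis by (rule P_step_pos[OF assms(1,3)])
qed

lemma P_pos_of_trav:
  assumes "{y, z} \<in> E" "trav \<tau> y z \<noteq> 0"
  shows "0 < P y z"
proof -
  obtain x where x: "(x, y, z) \<in> flags F" using edge_in_flag[OF assms(1)] .
  have "trav \<tau> y z + trav \<tau> z y = 2" using trav_add_trav_rev[OF x] .
  then have "trav \<tau> y z = 1 \<and> trav \<tau> z y = 1 \<or> trav \<tau> y z = 2 \<and> trav \<tau> z y = 0"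
    using assms(2) by arith
  then have "typeI_edge E \<tau> y z \<or> typeII_dir E \<tau> y z"
    unfolding typeI_edge_def typeII_dir_def using assms(1) by blast
  then show ?thesis by (rule mc_trans_pos[OF finite_vertices flag_vertices(3)[OF x]])
qed

lemma trav_face_cycle:
  assumes "(x, y, z) \<in> flags F" "trav \<tau> y z = 2"
  shows "trav \<tau> z x \<noteq> 0" "trav \<tau> x y \<noteq> 0"
proof -
  have "(y, z, x) \<in> orientation_flags" "(x, y, z) \<in> orientation_flags"
    using trav_flag[OF assms(1)] assms(2) by (auto simp: of_bool_def split: if_splits)
  moreover have "(y, z, x) \<in> flags F" "(z, x, y) \<in> flags F"
    using flags_rotate[OF assms(1)] flags_rotate[OF flags_rotate[OF assms(1)]] .
  ultimately show "trav \<tau> z x \<noteq> 0" "trav \<tau> x y \<noteq> 0" using trav_flag by simp_all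
qed

lemma reachable_along_edge:
  assumes "{y, z} \<in> E"
  shows "\<exists>n. 0 < mc_pow V P n y z"
proof (cases "trav \<tau> y z = 0")
  case False
  have "z \<in> V" using edgeD[OF assms] by simp
  then have "0 < mc_pow V P (Suc 0) y z" by (intro P_step_pos[OF P_pos_of_trav[OF assms False]]) simp_all
  then show ?thesis by blast
next
  case True
  have "{z, y} \<in> E" using assms by (simp add: insert_commute)
  then obtain x where x: "(x, z, y) \<in> flags F" by (rule edge_in_flag)
  then have "trav \<tau> z y = 2" using trav_add_trav_rev[OF x] True by simp
  then have "0 < P y x" "0 < P x z"
    using trav_face_cycle[OF x] flag_edges(1,3)[OF x] P_pos_of_trav by (simp_all add: insert_commute)
  then have "0 < mc_pow V P (Suc (Suc 0)) y z" using two_steps_pos flag_vertices[OF x] by blast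
  then show ?thesis by blast
qed

lemma irreducible_chain_P: "irreducible_chain V P"
  by (rule irreducible_chainI[of V P "{(x, y). {x, y} \<in> E}", OF finite_vertices P_nonneg])
    (auto intro: edges_connect reachable_along_edge)

lemma aperiodic_chain_P:
  assumes "f \<in> F" "face_typeI E \<tau> f"
  shows "aperiodic_chain V P"
proof -
  obtain p q u v where pq: "{p, q} \<subseteq> f" "typeI_edge E \<tau> p q"
    and uv: "{u, v} \<subseteq> f" "typeII_dir E \<tau> u v"
    using face_typeI_edges[OF assms(2)] .
  have "{u, v} \<in> E" "trav \<tau> u v = 2" using uv(2) by (simp_all add: typeII_dir_def)
  have "u \<in> f" "v \<in> f" using uv(1) by simp_all
  then obtain w where f: "f = {w, u, v}" and wuv: "(w, u, v) \<in> flags F"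
    using face_flagE[OF assms(1) _ _ edge_distinct[OF \<open>{u, v} \<in> E\<close>]] by blast
  have P_wuv: "0 < P u v" "0 < P v w" "0 < P w u"
    using P_pos_of_trav trav_face_cycle[OF wuv \<open>trav \<tau> u v = 2\<close>] flag_edges[OF wuv] \<open>trav \<tau> u v = 2\<close>
    by (simp_all add: insert_commute)
  have cycle: "0 < mc_pow V P (Suc (Suc (Suc 0))) a a"
    if "0 < P a b" "0 < P b c" "0 < P c a" "a \<in> V" "b \<in> V" "c \<in> V" for a b c
    using P_step_pos[OF that(1,5) two_steps_pos[OF that(2,3,6,4)]] .
  note V_wuv = flag_vertices[OF wuv]
  have triangle: "0 < mc_pow V P (Suc (Suc (Suc 0))) a a" if "a \<in> {w, u, v}" for a
    using that cycle[OF P_wuv(3,1,2) V_wuv] cycle[OF P_wuv(1,2,3) V_wuv(2,3,1)]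
      cycle[OF P_wuv(2,3,1) V_wuv(3,1,2)] by blast
  have "{p, q} \<in> E" "trav \<tau> p q = 1" "trav \<tau> q p = 1" using pq(2) by (simp_all add: typeI_edge_def)
  then have "0 < P p q" "0 < P q p" using P_pos_of_trav by (simp_all add: insert_commute)
  moreover have "p \<in> V" "q \<in> V" using edgeD[OF \<open>{p, q} \<in> E\<close>] by simp_all
  ultimately have "0 < mc_pow V P (Suc (Suc 0)) p p" using two_steps_pos by blast
  moreover have "0 < mc_pow V P (Suc (Suc (Suc 0))) p p" using triangle pq(1) f by blast
  ultimately show ?thesis
    using aperiodic_chainI[of V P, OF finite_vertices P_nonneg irreducible_chain_P \<open>p \<in> V\<close>] by blast
qed

end

theorem proposition3:
  fixes V :: "'a set" and E F :: "'a set set" and \<tau> :: "'a list set set"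
  assumes "triangulation V E F"
    and "z_orientation E F \<tau>"
    and "\<exists>f\<in>F. face_typeI E \<tau> f"
  shows "ergodic_chain V (mc_trans V E \<tau>)"
proof -
  interpret z_oriented_surface V E F \<tau>
    using assms(1,2) by unfold_locales
  obtain f where "f \<in> F" "face_typeI E \<tau> f" using assms(3) ..
  then show ?thesis unfolding ergodic_chain_def using irreducible_chain_P aperiodic_chain_P by blast
qed

end
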